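(* Let $n\ge 1$, let $z_1,\dots,z_n\in\mathbb{C}$ be pairwise distinct, let $k_1,\dots,k_n\ge 0$ be integers, let $\beta_1,\dots,\beta_n\in\mathbb{C}$ and $\alpha_i^{(j)}\in\mathbb{C}$ ($j=1,\dots,n$, $i=1,\dots,k_j$), and set $m=\sum_{j=1}^n (k_j+1)$. For each $j$ let $J_{j,k_j}\in\mathbb{C}^{(k_j+1)\times(k_j+1)}$ be the upper bidiagonal matrix with diagonal entries $z_j$ and superdiagonal entries, from top to bottom, $\alpha_{k_j}^{(j)},\dots,\alpha_1^{(j)}$. Let $Z=J_{1,k_1}\oplus\cdots\oplus J_{n,k_n}\in\mathbb{C}^{m\times m}$ (block diagonal) and $w=\begin{bmatrix}\beta_1 e_{k_1+1}^\top & \cdots & \beta_n e_{k_n+1}^\top\end{bmatrix}^\top\in\mathbb{C}^m$, where $e_{k_j+1}=(0,\dots,0,1)^\top\in\mathbb{R}^{k_j+1}$. Let $k,\ell\le m$, let $x\in\mathcal{K}_k(Z,w)$ and $y\in\mathcal{K}_\ell(Z,w)$, and let $p\in\mathcal{P}_k$ and $q\in\mathcal{P}_\ell$ be polynomials with $p(Z)w=x$ and $q(Z)w=y$. Then $$y^H x = \sum_{j=1}^n |\beta_j|^2\left(\sum_{r=0}^{k_j}\left|\frac{\prod_{i=1}^{r}\alpha_i^{(j)}}{r!}\right|^2 \overline{q^{(r)}(z_j)}\, p^{(r)}(z_j)\right).$$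
   Context: $\mathcal{P}_k$ denotes the space of polynomials with complex coefficients of degree at most $k$. For $A\in\mathbb{C}^{m\times m}$ and $v\in\mathbb{C}^m$, the Krylov subspace is $\mathcal{K}_k(A,v)=\mathrm{span}\{v,Av,\dots,A^{k-1}v\}$. $y^H$ denotes the conjugate transpose of $y$. An empty product equals $1$. *)

theory Defs
  imports "Jordan_Normal_Form.Matrix" "HOL-Computational_Algebra.Polynomial"
begin

definition jblock :: "complex \<Rightarrow> (nat \<Rightarrow> complex) \<Rightarrow> nat \<Rightarrow> complex mat" where
  "jblock z a k = mat (k+1) (k+1)
     (\<lambda>(r,c). if r = c then z else if c = r + 1 then a (k - r) else 0)"

definition Zmat :: "nat \<Rightarrow> (nat \<Rightarrow> complex) \<Rightarrow> (nat \<Rightarrow> nat) \<Rightarrow> (nat \<Rightarrow> nat \<Rightarrow> complex) \<Rightarrow> complex mat" where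
  "Zmat n z k alpha = diag_block_mat (map (\<lambda>j. jblock (z j) (alpha j) (k j)) [0..<n])"

definition wvec :: "nat \<Rightarrow> (nat \<Rightarrow> nat) \<Rightarrow> (nat \<Rightarrow> complex) \<Rightarrow> complex vec" where
  "wvec n k beta = foldr (\<lambda>v acc. v @\<^sub>v acc)
     (map (\<lambda>j. vec (k j + 1) (\<lambda>i. if i = k j then beta j else 0)) [0..<n]) (vec 0 (\<lambda>_. 0))"

definition poly_mat_vec :: "complex poly \<Rightarrow> complex mat \<Rightarrow> complex vec \<Rightarrow> complex vec" where
  "poly_mat_vec p A v = vec (dim_vec v)
     (\<lambda>r. \<Sum>i\<le>degree p. coeff p i * ((A ^\<^sub>m i) *\<^sub>v v) $ r)"

definition krylov :: "complex mat \<Rightarrow> complex vec \<Rightarrow> nat \<Rightarrow> complex vec set" where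
  "krylov A v k = {x. \<exists>c :: nat \<Rightarrow> complex.
      x = vec (dim_vec v) (\<lambda>r. \<Sum>i<k. c i * ((A ^\<^sub>m i) *\<^sub>v v) $ r)}"

end

theory Submission
  imports Defs
begin

text \<open>
  Z is block diagonal and w is blockwise a multiple of the last unit vector, so p(Z) w is the
  concatenation of the vectors p(J) (beta e) over the bidiagonal blocks J.  Writing J = z I + N
  with N the weighted shift, (J^i e)_r = C(i, s) z^(i-s) alpha_1 ... alpha_s for s = k - r;
  summed against the coefficients of p this is alpha_1 ... alpha_s p^(s)(z) / s!, a scaled
  Taylor coefficient of p at z.  Hence y^H x splits into one sum per block, in which row r pairs
  the Taylor coefficients of order k - r of q and p.
\<close>

definition concat_vec :: "'a::zero vec list \<Rightarrow> 'a vec" where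
  "concat_vec vs = foldr (\<lambda>v acc. v @\<^sub>v acc) vs (vec 0 (\<lambda>_. 0))"

lemma concat_vec_Nil [simp]: "concat_vec [] = vec 0 (\<lambda>_. 0)"
  by (simp add: concat_vec_def)

lemma concat_vec_Cons [simp]: "concat_vec (v # vs) = v @\<^sub>v concat_vec vs"
  by (simp add: concat_vec_def)

lemma concat_vec_carrier:
  assumes "\<And>j. j \<in> set js \<Longrightarrow> v j \<in> carrier_vec (d j)"
  shows "concat_vec (map v js) \<in> carrier_vec (\<Sum>j\<leftarrow>js. d j)"
  using assms by (induction js) auto

lemma concat_vec_pointwise:
  assumes "\<And>j i. j \<in> set js \<Longrightarrow> u j i \<in> carrier_vec (d j)"
  shows "vec (\<Sum>j\<leftarrow>js. d j) (\<lambda>r. F (\<lambda>i. concat_vec (map (\<lambda>j. u j i) js) $ r))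
       = concat_vec (map (\<lambda>j. vec (d j) (\<lambda>r. F (\<lambda>i. u j i $ r))) js)"
  using assms
proof (induction js)
  case Nil
  then show ?case by auto
next
  case (Cons j js)
  have dims: "\<And>i. dim_vec (u j i) = d j"
    "\<And>i. dim_vec (concat_vec (map (\<lambda>j. u j i) js)) = (\<Sum>j\<leftarrow>js. d j)"
    using Cons.prems concat_vec_carrier[of js "\<lambda>j. u j _" d] by auto
  have IH: "concat_vec (map (\<lambda>j. vec (d j) (\<lambda>r. F (\<lambda>i. u j i $ r))) js)
      = vec (\<Sum>j\<leftarrow>js. d j) (\<lambda>r. F (\<lambda>i. concat_vec (map (\<lambda>j. u j i) js) $ r))"
    using Cons by simp
  show ?case
    by (rule eq_vecI) (auto simp: IH dims)
qed

lemma sum_conj_mult_concat_vec: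
  assumes "\<And>j. j \<in> set js \<Longrightarrow> x j \<in> carrier_vec (d j)"
    and "\<And>j. j \<in> set js \<Longrightarrow> y j \<in> carrier_vec (d j)"
  shows "(\<Sum>r<(\<Sum>j\<leftarrow>js. d j). cnj (concat_vec (map y js) $ r) * concat_vec (map x js) $ r)
       = (\<Sum>j\<leftarrow>js. \<Sum>r<d j. cnj (y j $ r) * x j $ r)"
  using assms
proof (induction js)
  case Nil
  then show ?case by simp
next
  case (Cons j js)
  have sum_lessThan_add: "(\<Sum>r<a + b. f r) = (\<Sum>r<a. f r) + (\<Sum>r<b. f (a + r))" for a b and f :: "nat \<Rightarrow> complex"
    by (induction b) (simp_all add: add.assoc)
  have dims: "dim_vec (x j) = d j" "dim_vec (y j) = d j"
    "dim_vec (concat_vec (map x js)) = (\<Sum>j\<leftarrow>js. d j)"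
    "dim_vec (concat_vec (map y js)) = (\<Sum>j\<leftarrow>js. d j)"
    using Cons.prems concat_vec_carrier[of js x d] concat_vec_carrier[of js y d] by auto
  show ?case
    using Cons by (simp add: sum_lessThan_add dims)
qed

lemma diag_block_mat_carrier:
  assumes "\<And>j. j \<in> set js \<Longrightarrow> A j \<in> carrier_mat (d j) (d j)"
  shows "diag_block_mat (map A js) \<in> carrier_mat (\<Sum>j\<leftarrow>js. d j) (\<Sum>j\<leftarrow>js. d j)"
proof (rule carrier_matI)
  have "map dim_row (map A js) = map d js" "map dim_col (map A js) = map d js"
    using assms by (auto simp: map_eq_conv intro: carrier_matD)
  then show "dim_row (diag_block_mat (map A js)) = (\<Sum>j\<leftarrow>js. d j)"
    and "dim_col (diag_block_mat (map A js)) = (\<Sum>j\<leftarrow>js. d j)"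
    by (simp_all only: dim_diag_block_mat)
qed

lemma diag_block_mat_mult_concat_vec:
  assumes "\<And>j. j \<in> set js \<Longrightarrow> A j \<in> carrier_mat (d j) (d j)"
    and "\<And>j. j \<in> set js \<Longrightarrow> v j \<in> carrier_vec (d j)"
  shows "diag_block_mat (map A js) *\<^sub>v concat_vec (map v js) = concat_vec (map (\<lambda>j. A j *\<^sub>v v j) js)"
  using assms
proof (induction js)
  case Nil
  then show ?case by (auto intro!: eq_vecI)
next
  case (Cons j js)
  have A: "A j \<in> carrier_mat (d j) (d j)" and v: "v j \<in> carrier_vec (d j)"
    using Cons.prems by auto
  have D: "diag_block_mat (map A js) \<in> carrier_mat (\<Sum>j\<leftarrow>js. d j) (\<Sum>j\<leftarrow>js. d j)"
    using Cons.prems by (intro diag_block_mat_carrier) auto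
  have V: "concat_vec (map v js) \<in> carrier_vec (\<Sum>j\<leftarrow>js. d j)"
    using Cons.prems by (intro concat_vec_carrier) auto
  have blocks: "diag_block_mat (A j # map A js) = four_block_mat (A j) (0\<^sub>m (d j) (\<Sum>j\<leftarrow>js. d j))
      (0\<^sub>m (\<Sum>j\<leftarrow>js. d j) (d j)) (diag_block_mat (map A js))"
    using A D by (simp only: diag_block_mat.simps Let_def carrier_matD)
  have IH: "diag_block_mat (map A js) *\<^sub>v concat_vec (map v js) = concat_vec (map (\<lambda>j. A j *\<^sub>v v j) js)"
    using Cons by simp
  show ?case
    unfolding blocks list.map concat_vec_Cons mult_mat_vec_split[OF A D v V] IH ..
qed

lemma poly_mat_vec_diag_block_mat:
  assumes "\<And>j. j \<in> set js \<Longrightarrow> A j \<in> carrier_mat (d j) (d j)"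
    and "\<And>j. j \<in> set js \<Longrightarrow> v j \<in> carrier_vec (d j)"
  shows "poly_mat_vec p (diag_block_mat (map A js)) (concat_vec (map v js))
       = concat_vec (map (\<lambda>j. poly_mat_vec p (A j) (v j)) js)"
proof -
  have square: "Ball (set (map A js)) square_mat"
    by (simp add: carrier_matD[OF assms(1)])
  have power: "diag_block_mat (map A js) ^\<^sub>m i *\<^sub>v concat_vec (map v js)
      = concat_vec (map (\<lambda>j. A j ^\<^sub>m i *\<^sub>v v j) js)" for i
  proof -
    have pow: "diag_block_mat (map A js) ^\<^sub>m i = diag_block_mat (map (\<lambda>j. A j ^\<^sub>m i) js)"
      using diag_block_pow_mat[OF square, of i] by (simp only: map_map comp_def)
    have "diag_block_mat (map (\<lambda>j. A j ^\<^sub>m i) js) *\<^sub>v concat_vec (map v js)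
        = concat_vec (map (\<lambda>j. A j ^\<^sub>m i *\<^sub>v v j) js)"
      by (rule diag_block_mat_mult_concat_vec[where d = d]) (blast intro: pow_carrier_mat assms)+
    then show ?thesis
      unfolding pow .
  qed
  have dim: "dim_vec (concat_vec (map v js)) = (\<Sum>j\<leftarrow>js. d j)"
    using concat_vec_carrier[of js v d] assms(2) by auto
  have "poly_mat_vec p (diag_block_mat (map A js)) (concat_vec (map v js))
      = vec (\<Sum>j\<leftarrow>js. d j) (\<lambda>r. \<Sum>i\<le>degree p. coeff p i * concat_vec (map (\<lambda>j. A j ^\<^sub>m i *\<^sub>v v j) js) $ r)"
    unfolding poly_mat_vec_def dim power ..
  also have "\<dots> = concat_vec (map (\<lambda>j. vec (d j) (\<lambda>r. \<Sum>i\<le>degree p. coeff p i * (A j ^\<^sub>m i *\<^sub>v v j) $ r)) js)"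
    by (rule concat_vec_pointwise[where F = "\<lambda>f. \<Sum>i\<le>degree p. coeff p i * f i"])
      (metis mult_mat_vec_carrier pow_carrier_mat assms)
  also have "\<dots> = concat_vec (map (\<lambda>j. poly_mat_vec p (A j) (v j)) js)"
    unfolding poly_mat_vec_def
    by (intro arg_cong[where f = concat_vec] map_cong) (simp_all add: carrier_vecD[OF assms(2)])
  finally show ?thesis .
qed

lemma pochhammer_Suc_diff_eq_fact_mult_choose:
  assumes "s \<le> i"
  shows "pochhammer (of_nat (Suc (i - s)) :: 'a::field_char_0) s = fact s * of_nat (i choose s)"
proof -
  have "(of_nat (Suc (i - s)) :: 'a) = of_nat i - of_nat s + 1"
    using assms by (simp add: of_nat_diff)
  also have "pochhammer \<dots> s = fact s * (of_nat i gchoose s)"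
    by (simp add: gbinomial_pochhammer')
  also have "\<dots> = fact s * of_nat (i choose s)"
    by (simp add: binomial_gbinomial)
  finally show ?thesis .
qed

lemma higher_pderiv_monom_choose:
  fixes c :: "'a::field_char_0"
  shows "(pderiv ^^ s) (monom c i) =
    (if s \<le> i then monom (fact s * of_nat (i choose s) * c) (i - s) else 0)"
proof (rule poly_eqI)
  fix n
  show "coeff ((pderiv ^^ s) (monom c i)) n =
      coeff (if s \<le> i then monom (fact s * of_nat (i choose s) * c) (i - s) else 0) n"
    using pochhammer_Suc_diff_eq_fact_mult_choose[of s i, where 'a = 'a]
    by (auto simp: coeff_higher_pderiv coeff_monom)
qed

lemma poly_higher_pderiv_eq_sum:
  fixes z :: "'a::field_char_0"
  shows "poly ((pderiv ^^ s) p) z =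
    fact s * (\<Sum>i\<le>degree p. coeff p i * of_nat (i choose s) * z ^ (i - s))"
proof -
  have "poly ((pderiv ^^ s) p) z = (\<Sum>i\<le>degree p. poly ((pderiv ^^ s) (monom (coeff p i) i)) z)"
    by (subst poly_as_sum_of_monoms[symmetric, of p]) (simp add: higher_pderiv_sum poly_sum)
  also have "\<dots> = (\<Sum>i\<le>degree p. fact s * (coeff p i * of_nat (i choose s) * z ^ (i - s)))"
    by (rule sum.cong) (auto simp: higher_pderiv_monom_choose poly_monom)
  finally show ?thesis
    by (simp add: sum_distrib_left)
qed

lemma binomial_power_Suc:
  fixes z :: "'a::comm_semiring_1"
  shows "of_nat (Suc i choose Suc t) * z ^ (i - t)
    = z * (of_nat (i choose Suc t) * z ^ (i - Suc t)) + of_nat (i choose t) * z ^ (i - t)"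
proof (cases "t < i")
  case True
  then have "z ^ (i - t) = z * z ^ (i - Suc t)"
    by (simp add: Suc_diff_Suc[symmetric])
  then show ?thesis
    by (simp add: algebra_simps)
next
  case False
  then show ?thesis
    by (simp add: binomial_eq_0)
qed

lemma pow_mat_Suc_left:
  assumes "A \<in> carrier_mat n n"
  shows "A ^\<^sub>m Suc i = A * A ^\<^sub>m i"
proof (induction i)
  case 0
  then show ?case using assms by simp
next
  case (Suc i)
  have "A ^\<^sub>m Suc (Suc i) = (A * A ^\<^sub>m i) * A"
    using Suc by simp
  also have "\<dots> = A * A ^\<^sub>m Suc i"
    using assms by (simp add: assoc_mult_mat[of _ n n _ n _ n])
  finally show ?case .
qed

lemma jblock_carrier: "jblock z a K \<in> carrier_mat (K + 1) (K + 1)"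
  by (simp add: jblock_def)

lemma jblock_mult_vec_nth:
  assumes "dim_vec v = K + 1" and "r \<le> K"
  shows "(jblock z a K *\<^sub>v v) $ r = z * v $ r + (if r < K then a (K - r) * v $ (r + 1) else 0)"
proof -
  have "(jblock z a K *\<^sub>v v) $ r
      = (\<Sum>c<K + 1. (if c = r then z * v $ c else 0) + (if c = r + 1 then a (K - r) * v $ c else 0))"
    using assms
    by (auto simp: jblock_def scalar_prod_def atLeast0LessThan intro!: sum.cong)
  also have "\<dots> = z * v $ r + (if r < K then a (K - r) * v $ (r + 1) else 0)"
    using assms(2) by (simp add: sum.distrib)
  finally show ?thesis .
qed

lemma jblock_pow_mult_last_unit:
  "jblock z a K ^\<^sub>m i *\<^sub>v vec (K + 1) (\<lambda>j. if j = K then b else 0)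
    = vec (K + 1) (\<lambda>r. b * of_nat (i choose (K - r)) * z ^ (i - (K - r)) * (\<Prod>t=1..K-r. a t))"
proof -
  define u where "u i s = b * of_nat (i choose s) * z ^ (i - s) * (\<Prod>t=1..s. a t)" for i s
  have u_Suc_0: "u (Suc i) 0 = z * u i 0" for i
    by (simp add: u_def)
  have u_Suc_Suc: "u (Suc i) (Suc s) = z * u i (Suc s) + a (Suc s) * u i s" for i s
  proof -
    have "u (Suc i) (Suc s) = b * (\<Prod>t=1..s. a t) * a (Suc s) * (of_nat (Suc i choose Suc s) * z ^ (i - s))"
      by (simp add: u_def prod.cl_ivl_Suc algebra_simps del: binomial_Suc_Suc)
    also have "\<dots> = z * u i (Suc s) + a (Suc s) * u i s"
      unfolding binomial_power_Suc by (simp add: u_def prod.cl_ivl_Suc algebra_simps)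
    finally show ?thesis .
  qed
  have "jblock z a K ^\<^sub>m i *\<^sub>v vec (K + 1) (\<lambda>j. if j = K then b else 0) = vec (K + 1) (\<lambda>r. u i (K - r))"
  proof (induction i)
    case 0
    show ?case
      by (rule eq_vecI) (auto simp: jblock_def u_def)
  next
    case (Suc i)
    have "jblock z a K ^\<^sub>m Suc i *\<^sub>v vec (K + 1) (\<lambda>j. if j = K then b else 0)
        = jblock z a K *\<^sub>v vec (K + 1) (\<lambda>r. u i (K - r))"
      unfolding pow_mat_Suc_left[OF jblock_carrier] Suc[symmetric]
      by (rule assoc_mult_mat_vec[of _ "K + 1" "K + 1" _ "K + 1"]) (simp_all add: jblock_def)
    also have "\<dots> = vec (K + 1) (\<lambda>r. u (Suc i) (K - r))"
    proof (rule eq_vecI)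
      fix r
      assume "r < dim_vec (vec (K + 1) (\<lambda>r. u (Suc i) (K - r)))"
      then have r: "r \<le> K"
        by simp
      show "(jblock z a K *\<^sub>v vec (K + 1) (\<lambda>r. u i (K - r))) $ r = vec (K + 1) (\<lambda>r. u (Suc i) (K - r)) $ r"
      proof (cases "r < K")
        case True
        then obtain t where "K - r = Suc t" "K - Suc r = t"
          by (metis Suc_diff_Suc)
        with r True show ?thesis
          by (simp add: jblock_mult_vec_nth u_Suc_Suc)
      next
        case False
        with r show ?thesis
          by (simp add: jblock_mult_vec_nth u_Suc_0)
      qed
    qed (simp add: jblock_def)
    finally show ?case .
  qed
  then show ?thesis
    by (simp add: u_def)
qed

definition taylor_vec :: "complex \<Rightarrow> (nat \<Rightarrow> complex) \<Rightarrow> nat \<Rightarrow> complex \<Rightarrow> complex poly \<Rightarrow> complex vec" where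
  "taylor_vec z a K b p =
    vec (K + 1) (\<lambda>r. b * ((\<Prod>t=1..K-r. a t) / fact (K - r)) * poly ((pderiv ^^ (K - r)) p) z)"

lemma poly_mat_vec_jblock_last_unit:
  "poly_mat_vec p (jblock z a K) (vec (K + 1) (\<lambda>j. if j = K then b else 0)) = taylor_vec z a K b p"
  unfolding poly_mat_vec_def taylor_vec_def jblock_pow_mult_last_unit
  by (rule eq_vecI)
    (simp_all add: poly_higher_pderiv_eq_sum sum_distrib_left algebra_simps)

lemma sum_conj_mult_taylor_vec:
  "(\<Sum>r<K + 1. cnj (taylor_vec z a K b q $ r) * taylor_vec z a K b p $ r)
    = complex_of_real ((cmod b)\<^sup>2) *
      (\<Sum>s\<le>K. complex_of_real ((cmod ((\<Prod>t=1..s. a t) / fact s))\<^sup>2)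
        * cnj (poly ((pderiv ^^ s) q) z) * poly ((pderiv ^^ s) p) z)"
proof -
  have "(\<Sum>r<K + 1. cnj (taylor_vec z a K b q $ r) * taylor_vec z a K b p $ r)
      = (\<Sum>r<K + 1. cnj (b * ((\<Prod>t=1..K-r. a t) / fact (K - r)) * poly ((pderiv ^^ (K - r)) q) z)
          * (b * ((\<Prod>t=1..K-r. a t) / fact (K - r)) * poly ((pderiv ^^ (K - r)) p) z))"
    by (simp add: taylor_vec_def)
  also have "\<dots> = (\<Sum>s\<le>K. cnj (b * ((\<Prod>t=1..s. a t) / fact s) * poly ((pderiv ^^ s) q) z)
          * (b * ((\<Prod>t=1..s. a t) / fact s) * poly ((pderiv ^^ s) p) z))"
    using sum.nat_diff_reindex[of "\<lambda>s. cnj (b * ((\<Prod>t=1..s. a t) / fact s) * poly ((pderiv ^^ s) q) z)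
          * (b * ((\<Prod>t=1..s. a t) / fact s) * poly ((pderiv ^^ s) p) z)" "K + 1"]
    by (simp add: lessThan_Suc_atMost)
  also have "\<dots> = complex_of_real ((cmod b)\<^sup>2) *
      (\<Sum>s\<le>K. complex_of_real ((cmod ((\<Prod>t=1..s. a t) / fact s))\<^sup>2)
        * cnj (poly ((pderiv ^^ s) q) z) * poly ((pderiv ^^ s) p) z)"
    unfolding sum_distrib_left complex_norm_square
    by (rule sum.cong) (simp_all only: complex_cnj_mult mult_ac)
  finally show ?thesis .
qed

theorem theorem1:
  fixes n m kk ll :: nat
    and z beta :: "nat \<Rightarrow> complex"
    and k :: "nat \<Rightarrow> nat"
    and alpha :: "nat \<Rightarrow> nat \<Rightarrow> complex"
    and x y :: "complex vec"
    and p q :: "complex poly"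
  assumes "n \<ge> 1"
    and "inj_on z {..<n}"
    and "m = (\<Sum>j<n. k j + 1)"
    and "kk \<le> m" and "ll \<le> m"
    and "x \<in> krylov (Zmat n z k alpha) (wvec n k beta) kk"
    and "y \<in> krylov (Zmat n z k alpha) (wvec n k beta) ll"
    and "degree p \<le> kk" and "degree q \<le> ll"
    and "poly_mat_vec p (Zmat n z k alpha) (wvec n k beta) = x"
    and "poly_mat_vec q (Zmat n z k alpha) (wvec n k beta) = y"
  shows "(\<Sum>i<m. cnj (y $ i) * x $ i) =
    (\<Sum>j<n. complex_of_real ((cmod (beta j))\<^sup>2) *
       (\<Sum>r\<le>k j. complex_of_real ((cmod ((\<Prod>i=1..r. alpha j i) / fact r))\<^sup>2)
          * cnj (poly ((pderiv ^^ r) q) (z j)) * poly ((pderiv ^^ r) p) (z j)))"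
proof -
  define T where "T f j = taylor_vec (z j) (alpha j) (k j) (beta j) f" for f j
  have blocks: "poly_mat_vec f (Zmat n z k alpha) (wvec n k beta) = concat_vec (map (T f) [0..<n])" for f
    unfolding Zmat_def wvec_def concat_vec_def[symmetric] T_def
    by (subst poly_mat_vec_diag_block_mat[where d = "\<lambda>j. k j + 1"])
      (simp_all add: jblock_carrier[simplified] poly_mat_vec_jblock_last_unit[simplified])
  have T_carrier: "T f j \<in> carrier_vec (k j + 1)" for f j
    by (simp add: T_def taylor_vec_def)
  have "m = (\<Sum>j\<leftarrow>[0..<n]. k j + 1)"
    using assms(3) by (simp add: sum_set_upt_conv_sum_list_nat[symmetric] atLeast0LessThan)
  then have "(\<Sum>i<m. cnj (y $ i) * x $ i) = (\<Sum>j\<leftarrow>[0..<n]. \<Sum>r<k j + 1. cnj (T q j $ r) * T p j $ r)"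
    using sum_conj_mult_concat_vec[of "[0..<n]" "T p" "\<lambda>j. k j + 1" "T q"] T_carrier
    by (simp add: assms(10,11)[symmetric] blocks)
  also have "\<dots> = (\<Sum>j<n. \<Sum>r<k j + 1. cnj (T q j $ r) * T p j $ r)"
    by (simp only: sum_set_upt_conv_sum_list_nat[symmetric] set_upt atLeast0LessThan)
  finally show ?thesis
    unfolding T_def sum_conj_mult_taylor_vec .
qed

end
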